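(* Assume $S\times M\neq\emptyset$, let $(x,\lambda):[t_0,+\infty[\ \to X\times Y$ be a solution of (AHT), and suppose there exists $t_+\ge t_0$ such that $\varepsilon^2(t)+\dot\varepsilon(t)\ge0$ and $2\varepsilon(t)\dot\varepsilon(t)+\ddot\varepsilon(t)\le0$ for all $t\ge t_+$. Then for every $(\bar x,\bar\lambda)\in S\times M$, as $t\to+\infty$: \[ \|(\dot x(t),\dot\lambda(t))+\varepsilon(t)((x(t),\lambda(t))-(\bar x,\bar\lambda))\|^2=\mathcal{O}\big(e^{-2\rho(t)}+\varepsilon^2(t)\big), \] \[ \varepsilon(t)\big(L(x(t),\bar\lambda)-L(\bar x,\lambda(t))\big)=\mathcal{O}\big(e^{-2\rho(t)}+\varepsilon^2(t)\big),\qquad \|T(x(t),\lambda(t))-T(\bar x,\bar\lambda)\|^2=\mathcal{O}\big(e^{-2\rho(t)}+\varepsilon^2(t)\big). \]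
   Context: $X,Y$ are real Hilbert spaces; $X\times Y$ carries the product inner product and norm $\|\cdot\|$. Standing assumptions: $f:X\to\mathbb{R}$ is convex and continuously differentiable with $\nabla f$ Lipschitz continuous on bounded subsets of $X$; $A:X\to Y$ is linear and continuous with adjoint $A^*$; $b\in Y$; $\varepsilon:[t_0,+\infty[\ \to\ ]0,+\infty[$ ($t_0\ge0$) is twice continuously differentiable with $\lim_{t\to+\infty}\varepsilon(t)=0$. $L(x,\lambda)=f(x)+\langle\lambda,Ax-b\rangle_Y$ and $T(x,\lambda)=(\nabla f(x)+A^*\lambda,\ b-Ax)$. $S$ is the set of optimal solutions of $\min\{f(x):Ax=b\}$, $M$ the set of Lagrange multipliers; $S\times M$ is the set of saddle points of $L$, equal to the zero set of $T$. $\rho(t)=\int_{t_0}^t\varepsilon(\tau)\,d\tau$. (AHT) is the system $\dot x+\nabla f(x)+A^*\lambda+\varepsilon(t)x=0$, $\dot\lambda+b-Ax+\varepsilon(t)\lambda=0$; a solution is a continuously differentiable $(x,\lambda):[t_0,+\infty[\ \to X\times Y$ satisfying it on $[t_0,+\infty[$ (existence and uniqueness for every initial datum is assumed). *)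

theory Defs
  imports "HOL-Analysis.Analysis" "HOL-Library.Landau_Symbols"
begin

definition Lag :: "('a::real_inner \<Rightarrow> real) \<Rightarrow> ('a \<Rightarrow> 'b::real_inner) \<Rightarrow> 'b \<Rightarrow> 'a \<Rightarrow> 'b \<Rightarrow> real" where
  "Lag f A b x l = f x + inner l (A x - b)"

definition Top :: "('a::real_inner \<Rightarrow> 'a) \<Rightarrow> ('a \<Rightarrow> 'b::real_inner) \<Rightarrow> ('b \<Rightarrow> 'a) \<Rightarrow> 'b \<Rightarrow> 'a \<Rightarrow> 'b \<Rightarrow> 'a \<times> 'b" where
  "Top gradf A Astar b x l = (gradf x + Astar l, b - A x)"

definition optsol :: "('a \<Rightarrow> real) \<Rightarrow> ('a \<Rightarrow> 'b) \<Rightarrow> 'b \<Rightarrow> 'a set" where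
  "optsol f A b = {x. A x = b \<and> (\<forall>y. A y = b \<longrightarrow> f x \<le> f y)}"

definition lagmult :: "('a \<Rightarrow> real) \<Rightarrow> ('a \<Rightarrow> 'a) \<Rightarrow> ('a \<Rightarrow> 'b) \<Rightarrow> ('b \<Rightarrow> 'a::real_vector) \<Rightarrow> 'b \<Rightarrow> 'b set" where
  "lagmult f gradf A Astar b = {l. \<exists>xs\<in>optsol f A b. gradf xs + Astar l = 0}"

end

theory Submission
  imports Defs
begin

text \<open>
  Writing \<open>z = (x, \<lambda>)\<close>, (AHT) is the regularised monotone flow \<open>z' + T z + \<epsilon> z = 0\<close>: the map
  \<open>T\<close> is monotone because \<open>f\<close> is convex and \<open>A\<^sup>*\<close> is the adjoint of \<open>A\<close>, it is Lipschitz on bounded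
  sets, and the saddle points are its zeros. For a zero \<open>z\<^sub>0\<close> of \<open>T\<close>, the function
  \<open>e\<^sup>\<rho> (\<parallel>z - z\<^sub>0\<parallel>\<^sup>2 - \<parallel>z\<^sub>0\<parallel>\<^sup>2)\<close> is nonincreasing, so the trajectory is bounded. The main estimate
  comes from the Lyapunov function \<open>e\<^sup>2\<^sup>\<rho> (\<parallel>z'\<parallel>\<^sup>2 + \<epsilon>' \<parallel>z\<parallel>\<^sup>2)\<close>, whose rate of change is at most
  \<open>e\<^sup>2\<^sup>\<rho> \<parallel>z\<parallel>\<^sup>2 (2 \<epsilon> \<epsilon>' + \<epsilon>'') \<le> 0\<close>; together with \<open>\<epsilon>' \<ge> -\<epsilon>\<^sup>2\<close> this gives
  \<open>\<parallel>z'\<parallel>\<^sup>2 = O(e\<^sup>-\<^sup>2\<^sup>\<rho> + \<epsilon>\<^sup>2)\<close>. Since \<open>T\<close> is merely Lipschitz, \<open>z'\<close> need not be differentiable: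
  the rate of change is an upper right Dini derivative, bounded with the help of the monotonicity
  of \<open>T\<close>. The three rates follow from the boundedness of \<open>z\<close>, from \<open>T z = -(z' + \<epsilon> z)\<close>, and from
  the gap bound \<open>0 \<le> L(x, \<lambda>\<^sub>0) - L(x\<^sub>0, \<lambda>) \<le> \<langle>T z, z - z\<^sub>0\<rangle>\<close>.
\<close>

section \<open>Upper right Dini derivatives\<close>

text \<open>\<open>right_Dini_le \<Phi> t D\<close> says \<open>D\<^sup>+\<Phi>(t) = limsup\<^sub>s\<^sub>\<down>\<^sub>t (\<Phi> s - \<Phi> t) / (s - t) \<le> D\<close>.\<close>

definition right_Dini_le :: "(real \<Rightarrow> real) \<Rightarrow> real \<Rightarrow> real \<Rightarrow> bool" where
  "right_Dini_le \<Phi> t D \<longleftrightarrow> (\<forall>d>0. eventually (\<lambda>s. \<Phi> s \<le> \<Phi> t + (s - t) * (D + d)) (at_right t))"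

lemma right_Dini_le_if_quotient_bound:
  assumes G: "(G \<longlongrightarrow> G0) (at_right t)" and "G0 \<le> D"
    and bound: "eventually (\<lambda>s. \<Phi> s - \<Phi> t \<le> (s - t) * G s) (at_right t)"
  shows "right_Dini_le \<Phi> t D"
  unfolding right_Dini_le_def
proof (intro allI impI)
  fix d :: real assume "d > 0"
  with G \<open>G0 \<le> D\<close> have "eventually (\<lambda>s. G s < D + d) (at_right t)"
    by (intro order_tendstoD(2)) auto
  with bound eventually_at_right_less[of t]
  show "eventually (\<lambda>s. \<Phi> s \<le> \<Phi> t + (s - t) * (D + d)) (at_right t)"
  proof eventually_elim
    case (elim s)
    then have "(s - t) * G s \<le> (s - t) * (D + d)" by (intro mult_left_mono) auto
    with elim show ?case by linarith
  qed
qed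

lemma right_Dini_le_if_has_derivative:
  assumes "(\<Phi> has_real_derivative D) (at_right t)"
  shows "right_Dini_le \<Phi> t D"
proof (rule right_Dini_le_if_quotient_bound)
  show "((\<lambda>s. (\<Phi> s - \<Phi> t) / (s - t)) \<longlongrightarrow> D) (at_right t)"
    using assms by (simp add: has_field_derivative_iff)
  show "eventually (\<lambda>s. \<Phi> s - \<Phi> t \<le> (s - t) * ((\<Phi> s - \<Phi> t) / (s - t))) (at_right t)"
    using eventually_at_right_less[of t] by eventually_elim simp
qed simp

lemma right_Dini_le_mono:
  assumes "right_Dini_le \<Phi> t D" "D \<le> D'"
  shows "right_Dini_le \<Phi> t D'"
  unfolding right_Dini_le_def
proof (intro allI impI)
  fix d :: real assume "d > 0"
  with assms(1) have "eventually (\<lambda>s. \<Phi> s \<le> \<Phi> t + (s - t) * (D + d)) (at_right t)"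
    unfolding right_Dini_le_def by blast
  with eventually_at_right_less[of t]
  show "eventually (\<lambda>s. \<Phi> s \<le> \<Phi> t + (s - t) * (D' + d)) (at_right t)"
  proof eventually_elim
    case (elim s)
    have "(s - t) * (D + d) \<le> (s - t) * (D' + d)"
      using elim assms(2) by (intro mult_left_mono) auto
    with elim show ?case by linarith
  qed
qed

lemma right_Dini_le_add:
  assumes "right_Dini_le \<Phi> t D" "right_Dini_le \<Psi> t D'"
  shows "right_Dini_le (\<lambda>s. \<Phi> s + \<Psi> s) t (D + D')"
  unfolding right_Dini_le_def
proof (intro allI impI)
  fix d :: real assume "d > 0"
  then have "eventually (\<lambda>s. \<Phi> s \<le> \<Phi> t + (s - t) * (D + d / 2)) (at_right t)"
    "eventually (\<lambda>s. \<Psi> s \<le> \<Psi> t + (s - t) * (D' + d / 2)) (at_right t)"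
    using assms unfolding right_Dini_le_def by auto
  then show "eventually (\<lambda>s. \<Phi> s + \<Psi> s \<le> \<Phi> t + \<Psi> t + (s - t) * (D + D' + d)) (at_right t)"
  proof eventually_elim
    case (elim s)
    have "(s - t) * (D + D' + d) = (s - t) * (D + d / 2) + (s - t) * (D' + d / 2)"
      by (simp add: algebra_simps)
    with elim show ?case by linarith
  qed
qed

lemma right_Dini_le_if_le_plus:
  assumes "\<And>e. e > 0 \<Longrightarrow> right_Dini_le \<Phi> t (D + e)"
  shows "right_Dini_le \<Phi> t D"
  unfolding right_Dini_le_def
proof (intro allI impI)
  fix d :: real assume "d > 0"
  with assms[of "d / 2"] have "eventually (\<lambda>s. \<Phi> s \<le> \<Phi> t + (s - t) * (D + d / 2 + d / 2)) (at_right t)"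
    unfolding right_Dini_le_def by (meson half_gt_zero)
  then show "eventually (\<lambda>s. \<Phi> s \<le> \<Phi> t + (s - t) * (D + d)) (at_right t)"
    by (simp add: add.assoc)
qed

lemma right_Dini_le_mult_left:
  assumes F: "right_Dini_le F t D"
    and E: "(E has_real_derivative E') (at_right t)" and E_nonneg: "\<And>s. E s \<ge> 0"
  shows "right_Dini_le (\<lambda>s. E s * F s) t (E t * D + E' * F t)"
proof (rule right_Dini_le_if_le_plus)
  fix d :: real assume "d > 0"
  define e where "e = d / (E t + 1)"
  have "e > 0" "E t * e \<le> d"
    using \<open>d > 0\<close> E_nonneg[of t] by (auto simp: e_def field_simps)
  show "right_Dini_le (\<lambda>s. E s * F s) t (E t * D + E' * F t + d)"
  proof (rule right_Dini_le_if_quotient_bound)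
    have "(E \<longlongrightarrow> E t) (at_right t)"
      using DERIV_continuous[OF E] by (simp add: continuous_within)
    with E show "((\<lambda>s. E s * (D + e) + (E s - E t) / (s - t) * F t) \<longlongrightarrow> E t * (D + e) + E' * F t) (at_right t)"
      by (intro tendsto_intros) (simp_all add: has_field_derivative_iff)
    show "E t * (D + e) + E' * F t \<le> E t * D + E' * F t + d"
      using \<open>E t * e \<le> d\<close> by (simp add: algebra_simps)
    from F \<open>e > 0\<close> have "eventually (\<lambda>s. F s \<le> F t + (s - t) * (D + e)) (at_right t)"
      unfolding right_Dini_le_def by blast
    with eventually_at_right_less[of t]
    show "eventually (\<lambda>s. E s * F s - E t * F t \<le> (s - t) * (E s * (D + e) + (E s - E t) / (s - t) * F t)) (at_right t)"
    proof eventually_elim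
      case (elim s)
      then have "E s * F s \<le> E s * (F t + (s - t) * (D + e))"
        using E_nonneg[of s] by (intro mult_left_mono) auto
      moreover have "(s - t) * (E s * (D + e) + (E s - E t) / (s - t) * F t)
          = E s * (s - t) * (D + e) + (E s - E t) * F t"
        using elim by (simp add: field_simps)
      ultimately show ?case by (simp add: algebra_simps)
    qed
  qed
qed

lemma nonincreasing_if_right_Dini_le_0:
  assumes "a \<le> b" and cont: "continuous_on {a..b} \<Phi>"
    and Dini: "\<And>t. t \<in> {a..<b} \<Longrightarrow> right_Dini_le \<Phi> t 0"
  shows "\<Phi> b \<le> \<Phi> a"
proof (rule field_le_epsilon)
  fix e :: real assume "e > 0"
  define d where "d = e / (b - a + 1)"
  have "d > 0" "d * (b - a) \<le> e"
    using \<open>e > 0\<close> \<open>a \<le> b\<close> by (auto simp: d_def field_simps)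
  define S where "S = {s \<in> {a..b}. \<Phi> s \<le> \<Phi> a + d * (s - a)}"
  have "closed S"
    unfolding S_def by (intro continuous_on_closed_Collect_le cont continuous_intros closed_atLeastAtMost)
  moreover have "a \<in> S" "bdd_above S"
    using \<open>a \<le> b\<close> by (auto simp: S_def intro: bdd_aboveI[of _ b])
  ultimately have c: "Sup S \<in> S"
    using closed_contains_Sup by blast
  have "Sup S = b"
  proof (rule ccontr)
    assume "Sup S \<noteq> b"
    with c have "Sup S \<in> {a..<b}" by (auto simp: S_def)
    with Dini \<open>d > 0\<close> have "eventually (\<lambda>s. \<Phi> s \<le> \<Phi> (Sup S) + (s - Sup S) * (0 + d)) (at_right (Sup S))"
      unfolding right_Dini_le_def by blast
    moreover have "eventually (\<lambda>s. s \<in> {Sup S<..<b}) (at_right (Sup S))"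
      using \<open>Sup S \<in> {a..<b}\<close> by (intro eventually_at_right_real) simp
    ultimately have "eventually (\<lambda>s. s \<in> S \<and> s > Sup S) (at_right (Sup S))"
    proof eventually_elim
      case (elim s)
      with c show ?case by (auto simp: S_def algebra_simps)
    qed
    then obtain s where "s \<in> S" "s > Sup S"
      using eventually_happens' trivial_limit_at_right_real by blast
    with \<open>bdd_above S\<close> show False
      using cSup_upper by fastforce
  qed
  with c \<open>d * (b - a) \<le> e\<close> show "\<Phi> b \<le> \<Phi> a + e"
    by (auto simp: S_def)
qed


section \<open>Linearly constrained convex problems\<close>

lemma convex_on_imp_above_tangent_linear:
  fixes f :: "'a::real_normed_vector \<Rightarrow> real"
  assumes convex: "convex_on UNIV f" and deriv: "(f has_derivative f') (at u)"
  shows "f u + f' (v - u) \<le> f v"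
proof -
  define \<phi> where "\<phi> s = f (u + s *\<^sub>R (v - u))" for s
  have "convex_on UNIV \<phi>"
  proof (rule convex_onI)
    fix \<mu> s s' :: real
    have "u + ((1 - \<mu>) * s + \<mu> * s') *\<^sub>R (v - u) = (1 - \<mu>) *\<^sub>R (u + s *\<^sub>R (v - u)) + \<mu> *\<^sub>R (u + s' *\<^sub>R (v - u))"
      by (simp add: algebra_simps)
    moreover assume "0 < \<mu>" "\<mu> < 1"
    ultimately show "\<phi> ((1 - \<mu>) *\<^sub>R s + \<mu> *\<^sub>R s') \<le> (1 - \<mu>) * \<phi> s + \<mu> * \<phi> s'"
      unfolding \<phi>_def by (simp add: convex_onD[OF convex])
  qed simp
  moreover have "(\<phi> has_real_derivative f' (v - u)) (at 0)"
  proof -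
    interpret bounded_linear f'
      using deriv by (rule has_derivative_bounded_linear)
    have "((\<lambda>s. u + s *\<^sub>R (v - u)) has_derivative (\<lambda>s. s *\<^sub>R (v - u))) (at 0)"
      by (auto intro!: derivative_eq_intros)
    from diff_chain_at[OF this] deriv
    have "(\<phi> has_derivative (\<lambda>s. f' (s *\<^sub>R (v - u)))) (at 0)"
      unfolding \<phi>_def o_def by simp
    then show ?thesis
      unfolding has_field_derivative_def by (simp add: scaleR mult.commute[of _ "f' (v - u)"])
  qed
  ultimately have "\<phi> 1 - \<phi> 0 \<ge> f' (v - u) * (1 - 0)"
    by (intro convex_on_imp_above_tangent) auto
  then show ?thesis
    unfolding \<phi>_def by simp
qed

lemma bounded_linear_adjoint:
  fixes A :: "'a::real_inner \<Rightarrow> 'b::real_inner"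
  assumes A: "bounded_linear A" and adj: "\<And>u v. inner (A u) v = inner u (Astar v)"
  shows "bounded_linear Astar"
proof
  have eqI: "p = q" if "\<And>u. inner u p = inner u q" for p q :: 'a
    using that vector_eq_ldot by blast
  show "Astar (v + v') = Astar v + Astar v'" for v v'
    by (rule eqI) (simp add: adj[symmetric] inner_add_right)
  show "Astar (c *\<^sub>R v) = c *\<^sub>R Astar v" for c v
    by (rule eqI) (simp add: adj[symmetric])
  obtain K where "K > 0" and K: "\<And>u. norm (A u) \<le> norm u * K"
    using bounded_linear.pos_bounded[OF A] by blast
  have "norm (Astar v) \<le> norm v * K" for v
  proof -
    have "(norm (Astar v))\<^sup>2 = inner (A (Astar v)) v"
      by (simp add: adj power2_norm_eq_inner)
    also have "\<dots> \<le> norm (A (Astar v)) * norm v"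
      by (rule norm_cauchy_schwarz)
    also have "\<dots> \<le> norm (Astar v) * K * norm v"
      using K[of "Astar v"] by (rule mult_right_mono) simp
    finally show ?thesis
      using \<open>K > 0\<close> by (cases "Astar v = 0") (auto simp: power2_eq_square mult_ac)
  qed
  then show "\<exists>K. \<forall>v. norm (Astar v) \<le> norm v * K" by blast
qed

locale linearly_constrained_convex =
  fixes f :: "'a::real_inner \<Rightarrow> real"
    and gradf :: "'a \<Rightarrow> 'a"
    and A :: "'a \<Rightarrow> 'b::real_inner"
    and Astar :: "'b \<Rightarrow> 'a"
    and b :: 'b
  assumes f_convex: "convex_on UNIV f"
    and f_grad: "\<And>u. (f has_derivative (\<lambda>h. inner (gradf u) h)) (at u)"
    and A_lin: "bounded_linear A"
    and A_adj: "\<And>u v. inner (A u) v = inner u (Astar v)"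
begin

definition T :: "'a \<times> 'b \<Rightarrow> 'a \<times> 'b" where
  "T p = Top gradf A Astar b (fst p) (snd p)"

lemma Astar_lin: "bounded_linear Astar"
  using A_lin A_adj by (rule bounded_linear_adjoint)

lemma gradient_inequality: "f u + inner (gradf u) (v - u) \<le> f v"
  using f_convex f_grad by (rule convex_on_imp_above_tangent_linear)

lemma gradf_monotone: "0 \<le> inner (gradf u - gradf v) (u - v)"
  using gradient_inequality[of u v] gradient_inequality[of v u]
  by (simp add: inner_diff_left inner_diff_right)

lemma T_monotone: "0 \<le> inner (T p - T q) (p - q)"
proof -
  interpret A: bounded_linear A by (fact A_lin)
  interpret Astar: bounded_linear Astar by (fact Astar_lin)
  obtain u l u' l' where pq: "p = (u, l)" "q = (u', l')" by (cases p, cases q)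
  have "inner (T p - T q) (p - q) = inner (gradf u - gradf u') (u - u')
      + (inner (u - u') (Astar (l - l')) - inner (A (u - u')) (l - l'))"
    unfolding pq T_def Top_def
    by (simp add: A.diff Astar.diff inner_diff_left inner_diff_right inner_add_left inner_add_right
        inner_commute)
  then show ?thesis
    using gradf_monotone[of u u'] by (simp add: A_adj)
qed

lemma T_lipschitz_on_bounded:
  assumes gradf_lip: "\<And>B. bounded B \<Longrightarrow> \<exists>K. \<forall>u\<in>B. \<forall>v\<in>B. norm (gradf u - gradf v) \<le> K * norm (u - v)"
    and "bounded B"
  shows "\<exists>L. L-lipschitz_on B T"
proof -
  obtain K where K: "\<forall>u\<in>fst ` B. \<forall>v\<in>fst ` B. norm (gradf u - gradf v) \<le> K * norm (u - v)"
    using gradf_lip bounded_fst[OF \<open>bounded B\<close>] by blast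
  have "(max K 0)-lipschitz_on (fst ` B) gradf"
  proof (rule lipschitz_onI)
    fix u v assume "u \<in> fst ` B" "v \<in> fst ` B"
    with K have "norm (gradf u - gradf v) \<le> K * norm (u - v)" by blast
    also have "\<dots> \<le> max K 0 * norm (u - v)" by (rule mult_right_mono) auto
    finally show "dist (gradf u) (gradf v) \<le> max K 0 * dist u v" by (simp add: dist_norm)
  qed simp
  moreover obtain KA where "KA-lipschitz_on (fst ` B) A"
    using bounded_linear.lipschitz_boundE[OF A_lin] .
  moreover obtain KS where "KS-lipschitz_on (snd ` B) Astar"
    using bounded_linear.lipschitz_boundE[OF Astar_lin] .
  moreover have "1-lipschitz_on B fst" "1-lipschitz_on B snd"
    by (intro lipschitz_onI; simp add: dist_fst_le dist_snd_le)+
  ultimately have "(sqrt ((max K 0 * 1 + KS * 1)\<^sup>2 + (0 + KA * 1)\<^sup>2))-lipschitz_on B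
      (\<lambda>p. (gradf (fst p) + Astar (snd p), b - A (fst p)))"
    by (intro lipschitz_on_Pair lipschitz_on_add lipschitz_on_diff lipschitz_on_constant
        lipschitz_on_compose2[where f = fst] lipschitz_on_compose2[where f = snd])
  then show ?thesis
    unfolding T_def Top_def by blast
qed

lemma optsol_feasible: "xb \<in> optsol f A b \<Longrightarrow> A xb = b"
  by (simp add: optsol_def)

lemma Lag_minimal_at_optsol:
  assumes xb: "xb \<in> optsol f A b" and lb: "lb \<in> lagmult f gradf A Astar b"
  shows "Lag f A b xb lb \<le> Lag f A b u lb"
proof -
  interpret A: bounded_linear A by (fact A_lin)
  obtain xs where xs: "xs \<in> optsol f A b" "gradf xs + Astar lb = 0"
    using lb by (auto simp: lagmult_def)
  have "f xs - inner lb (A u - b) = f xs + inner (gradf xs) (u - xs)"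
    using xs optsol_feasible[of xs] A_adj[of "u - xs" lb]
    by (simp add: A.diff inner_commute eq_neg_iff_add_eq_0[symmetric])
  also have "\<dots> \<le> f u"
    by (rule gradient_inequality)
  finally have "f xs \<le> Lag f A b u lb"
    by (simp add: Lag_def)
  moreover have "f xb = f xs"
    using xb xs(1) by (auto simp: optsol_def intro: antisym)
  ultimately show ?thesis
    using xb by (simp add: Lag_def optsol_feasible)
qed

lemma gradient_Lag_at_optsol:
  assumes xb: "xb \<in> optsol f A b" and lb: "lb \<in> lagmult f gradf A Astar b"
  shows "gradf xb + Astar lb = 0"
proof -
  interpret A: bounded_linear A by (fact A_lin)
  have "((\<lambda>u. Lag f A b u lb) has_derivative (\<lambda>h. inner (gradf xb + Astar lb) h)) (at xb)"
    unfolding Lag_def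
    by (auto intro!: derivative_eq_intros f_grad A.has_derivative
        simp: fun_eq_iff inner_add_right A_adj[symmetric] inner_commute)
  from has_derivative_local_min[OF this] Lag_minimal_at_optsol[OF xb lb]
  have "(\<lambda>h. inner (gradf xb + Astar lb) h) = (\<lambda>h. 0)"
    by simp
  then show ?thesis
    by (metis inner_eq_zero_iff)
qed

lemma T_saddle_point:
  assumes "(xb, lb) \<in> optsol f A b \<times> lagmult f gradf A Astar b"
  shows "T (xb, lb) = 0"
  using assms optsol_feasible gradient_Lag_at_optsol by (simp add: T_def Top_def zero_prod_def)

lemma Lag_gap_bounds:
  assumes "(xb, lb) \<in> optsol f A b \<times> lagmult f gradf A Astar b"
  shows "0 \<le> Lag f A b u lb - Lag f A b xb l"
    and "Lag f A b u lb - Lag f A b xb l \<le> inner (T (u, l)) ((u, l) - (xb, lb))"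
proof -
  interpret A: bounded_linear A by (fact A_lin)
  have xb: "xb \<in> optsol f A b" and Axb: "A xb = b" and lb: "lb \<in> lagmult f gradf A Astar b"
    using assms optsol_feasible by auto
  then have "Lag f A b xb l = Lag f A b xb lb"
    by (simp add: Lag_def)
  with Lag_minimal_at_optsol[OF xb lb, of u]
  show "0 \<le> Lag f A b u lb - Lag f A b xb l"
    by simp
  have "inner (T (u, l)) ((u, l) - (xb, lb)) = inner (gradf u) (u - xb) + inner lb (A u - b)"
    using Axb A_adj[of "u - xb" l]
    by (simp add: T_def Top_def A.diff inner_add_left inner_add_right inner_diff_left inner_diff_right
        inner_commute)
  moreover have "f u + inner (gradf u) (xb - u) \<le> f xb"
    by (rule gradient_inequality)
  ultimately show "Lag f A b u lb - Lag f A b xb l \<le> inner (T (u, l)) ((u, l) - (xb, lb))"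
    using Axb by (simp add: Lag_def inner_diff_right)
qed

lemma scaled_Lag_gap_le:
  assumes "(xb, lb) \<in> optsol f A b \<times> lagmult f gradf A Astar b" and "0 \<le> e"
  shows "\<bar>e * (Lag f A b u lb - Lag f A b xb l)\<bar> \<le> \<bar>e * inner (T (u, l)) ((u, l) - (xb, lb))\<bar>"
  using Lag_gap_bounds[OF assms(1), of u l] assms(2) by (simp add: abs_mult mult_left_mono)

end


section \<open>Regularised monotone flows\<close>

lemma has_vector_derivative_at_right_quotient:
  assumes "(f has_vector_derivative f') (at_right t)"
  shows "((\<lambda>s. (f s - f t) /\<^sub>R (s - t)) \<longlongrightarrow> f') (at_right t)"
proof -
  have "((\<lambda>s. (1 / norm (s - t)) *\<^sub>R (f s - (f t + (s - t) *\<^sub>R f'))) \<longlongrightarrow> 0) (at_right t)"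
    using assms unfolding has_vector_derivative_def has_derivative_within by blast
  then have "((\<lambda>s. (1 / norm (s - t)) *\<^sub>R (f s - (f t + (s - t) *\<^sub>R f')) + f') \<longlongrightarrow> 0 + f') (at_right t)"
    by (intro tendsto_add tendsto_const)
  moreover have "eventually (\<lambda>s. (1 / norm (s - t)) *\<^sub>R (f s - (f t + (s - t) *\<^sub>R f')) + f'
      = (f s - f t) /\<^sub>R (s - t)) (at_right t)"
    using eventually_at_right_less[of t]
    by eventually_elim (simp add: scaleR_diff_right scaleR_add_right scaleR_diff_left[symmetric] inverse_eq_divide)
  ultimately show ?thesis
    by (simp add: tendsto_cong)
qed

lemma has_real_derivative_norm_sq:
  assumes "(f has_vector_derivative f') (at x within S)"
  shows "((\<lambda>s. (norm (f s))\<^sup>2) has_real_derivative 2 * inner (f x) f') (at x within S)"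
proof -
  have "((\<lambda>s. inner (f s) (f s)) has_vector_derivative inner (f x) f' + inner f' (f x)) (at x within S)"
    using bounded_bilinear.has_vector_derivative[OF bounded_bilinear_inner assms assms] .
  then show ?thesis
    by (simp add: has_real_derivative_iff_has_vector_derivative inner_commute power2_norm_eq_inner)
qed

text \<open>The monotonicity of \<open>T\<close> bounds the cross term \<open>\<langle>T a - T a', w\<rangle>\<close> by \<open>\<parallel>da + w\<parallel>\<close>, where
  \<open>w = T a' + p'\<close>; along the flow \<open>da\<close> tends to \<open>z' = -w\<close>, so this term vanishes in the limit.\<close>

lemma monotone_norm_sq_increment:
  fixes T :: "'a::real_inner \<Rightarrow> 'a"
  assumes mono: "0 \<le> inner (T a - T a') (a - a')"
    and lip: "norm (T a - T a') \<le> L * norm (a - a')"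
    and "h > 0" and da: "a - a' = h *\<^sub>R da" and dp: "p - p' = h *\<^sub>R dp"
  shows "(norm (T a + p))\<^sup>2 - (norm (T a' + p'))\<^sup>2
    \<le> h * (2 * (L * norm da * norm (da + (T a' + p'))) + 2 * inner dp (T a' + p')
      + h * (L * norm da + norm dp)\<^sup>2)"
proof -
  define w where "w = T a' + p'"
  define dT where "dT = T a - T a'"
  have dT: "norm dT \<le> h * (L * norm da)"
    using lip \<open>h > 0\<close> by (simp add: dT_def da mult_ac)
  have "inner dT w = inner dT (da + w) - inner dT (a - a') / h"
    using \<open>h > 0\<close> by (simp add: da inner_add_right)
  also have "\<dots> \<le> norm dT * norm (da + w)"
  proof -
    have "0 \<le> inner dT (a - a') / h"
      using mono \<open>h > 0\<close> by (simp add: dT_def)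
    then show ?thesis
      using norm_cauchy_schwarz[of dT "da + w"] by linarith
  qed
  also have "\<dots> \<le> h * (L * norm da * norm (da + w))"
    using mult_right_mono[OF dT norm_ge_zero[of "da + w"]] by (simp add: mult_ac)
  finally have cross: "inner dT w \<le> h * (L * norm da * norm (da + w))" .
  have "norm (dT + h *\<^sub>R dp) \<le> h * (L * norm da + norm dp)"
    using norm_triangle_ineq[of dT "h *\<^sub>R dp"] dT \<open>h > 0\<close> by (simp add: distrib_left)
  then have "(norm (dT + h *\<^sub>R dp))\<^sup>2 \<le> (h * (L * norm da + norm dp))\<^sup>2"
    by (rule power_mono) simp
  then have square: "(norm (dT + h *\<^sub>R dp))\<^sup>2 \<le> h * (h * (L * norm da + norm dp)\<^sup>2)"
    by (simp add: power_mult_distrib power2_eq_square mult_ac)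
  have "T a + p = w + (dT + h *\<^sub>R dp)"
    using dp by (simp add: w_def dT_def algebra_simps)
  then have "(norm (T a + p))\<^sup>2 - (norm w)\<^sup>2 = 2 * inner dT w + 2 * (h * inner dp w) + (norm (dT + h *\<^sub>R dp))\<^sup>2"
    by (simp add: power2_norm_eq_inner inner_commute algebra_simps)
  with cross square show ?thesis
    by (simp add: w_def algebra_simps)
qed

lemma right_Dini_le_norm_sq_monotone_flow:
  fixes T :: "'a::real_inner \<Rightarrow> 'a" and z q v :: "real \<Rightarrow> 'a"
  assumes T_mono: "\<And>u u'. 0 \<le> inner (T u - T u') (u - u')"
    and T_lip: "L-lipschitz_on U T" and U: "open U" "z t \<in> U"
    and z: "(z has_vector_derivative v t) (at_right t)"
    and q: "(q has_vector_derivative q') (at_right t)"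
    and v: "\<And>s. s \<ge> t \<Longrightarrow> v s = - T (z s) - q s"
  shows "right_Dini_le (\<lambda>s. (norm (v s))\<^sup>2) t (- 2 * inner q' (v t))"
proof (rule right_Dini_le_if_quotient_bound)
  define Dz where "Dz s = (z s - z t) /\<^sub>R (s - t)" for s
  define Dq where "Dq s = (q s - q t) /\<^sub>R (s - t)" for s
  define G where "G s = 2 * (L * norm (Dz s) * norm (Dz s + (T (z t) + q t)))
    + 2 * inner (Dq s) (T (z t) + q t) + (s - t) * (L * norm (Dz s) + norm (Dq s))\<^sup>2" for s
  have norm_v: "norm (v s) = norm (T (z s) + q s)" if "s \<ge> t" for s
  proof -
    have "v s = - (T (z s) + q s)"
      using v[OF that] by simp
    then show ?thesis
      by (simp only: norm_minus_cancel)
  qed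
  have "(Dz \<longlongrightarrow> v t) (at_right t)" "(Dq \<longlongrightarrow> q') (at_right t)" "((\<lambda>s. s - t) \<longlongrightarrow> 0) (at_right t)"
    unfolding Dz_def Dq_def using z q by (auto intro: has_vector_derivative_at_right_quotient tendsto_eq_intros)
  then show "(G \<longlongrightarrow> - 2 * inner q' (v t)) (at_right t)"
    unfolding G_def using v[OF order_refl] by (auto intro!: tendsto_eq_intros simp: inner_diff_right inner_add_right)
  have "(z \<longlongrightarrow> z t) (at_right t)"
    using has_vector_derivative_continuous[OF z] by (simp add: continuous_within)
  then have "eventually (\<lambda>s. z s \<in> U) (at_right t)"
    using U by (rule topological_tendstoD)
  with eventually_at_right_less[of t]
  show "eventually (\<lambda>s. (norm (v s))\<^sup>2 - (norm (v t))\<^sup>2 \<le> (s - t) * G s) (at_right t)"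
  proof eventually_elim
    case (elim s)
    then show ?case
      unfolding G_def norm_v[OF order_refl] norm_v[OF less_imp_le[OF elim(1)]]
      by (intro monotone_norm_sq_increment T_mono lipschitz_on_normD[OF T_lip] U(2))
        (simp_all add: Dz_def Dq_def)
  qed
qed simp

lemma bigo_if_eventually_bounded_by:
  assumes "h \<in> O[F](g)" and "eventually (\<lambda>x. norm (f x) \<le> K * h x) F"
  shows "f \<in> O[F](g)"
proof -
  have "eventually (\<lambda>x. norm (f x) \<le> \<bar>K\<bar> * norm (h x)) F"
    using assms(2) by eventually_elim (auto simp: abs_mult[symmetric] intro: order_trans[OF _ abs_ge_self])
  then have "f \<in> O[F](h)"
    by (rule bigoI)
  then show ?thesis
    using assms(1) by (rule landau_o.big_trans)
qed

lemma norm_add_sq_le: "(norm (a + b))\<^sup>2 \<le> 2 * (norm a)\<^sup>2 + 2 * (norm b)\<^sup>2"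
proof -
  have "(norm (a + b))\<^sup>2 \<le> (norm a + norm b)\<^sup>2"
    by (simp add: norm_triangle_ineq power_mono)
  also have "\<dots> \<le> 2 * (norm a)\<^sup>2 + 2 * (norm b)\<^sup>2"
    using sum_squares_bound[of "norm a" "norm b"] by (simp add: power2_sum)
  finally show ?thesis .
qed

locale tikhonov_monotone_flow =
  fixes T :: "'h::real_inner \<Rightarrow> 'h"
    and eps eps' eps'' :: "real \<Rightarrow> real"
    and z z' :: "real \<Rightarrow> 'h"
    and t0 :: real
  assumes T_monotone: "\<And>u v. 0 \<le> inner (T u - T v) (u - v)"
    and T_lipschitz: "\<And>B. bounded B \<Longrightarrow> \<exists>L. L-lipschitz_on B T"
    and eps_pos: "\<And>t. t \<ge> t0 \<Longrightarrow> eps t > 0"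
    and eps_deriv: "\<And>t. t \<ge> t0 \<Longrightarrow> (eps has_real_derivative eps' t) (at t within {t0..})"
    and eps'_deriv: "\<And>t. t \<ge> t0 \<Longrightarrow> (eps' has_real_derivative eps'' t) (at t within {t0..})"
    and z_deriv: "\<And>t. t \<ge> t0 \<Longrightarrow> (z has_vector_derivative z' t) (at t within {t0..})"
    and z'_continuous: "continuous_on {t0..} z'"
    and flow: "\<And>t. t \<ge> t0 \<Longrightarrow> z' t + T (z t) + eps t *\<^sub>R z t = 0"
begin

definition rho :: "real \<Rightarrow> real" where
  "rho t = integral {t0..t} eps"

lemma velocity_eq: "t \<ge> t0 \<Longrightarrow> z' t = - T (z t) - eps t *\<^sub>R z t"
  using flow[of t] by (simp add: algebra_simps eq_neg_iff_add_eq_0)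

lemma norm_T_eq:
  assumes "t \<ge> t0"
  shows "norm (T (z t)) = norm (z' t + eps t *\<^sub>R z t)"
proof -
  have "T (z t) = - (z' t + eps t *\<^sub>R z t)"
    using flow[OF assms] by (simp add: eq_neg_iff_add_eq_0 algebra_simps)
  then show ?thesis
    by (simp only: norm_minus_cancel)
qed

lemma norm_T_sq_le:
  assumes "t \<ge> t0" and "norm (z t) \<le> R"
  shows "(norm (T (z t)))\<^sup>2 \<le> 2 * (norm (z' t))\<^sup>2 + 2 * R\<^sup>2 * (eps t)\<^sup>2"
proof -
  have "(norm (T (z t)))\<^sup>2 \<le> 2 * (norm (z' t))\<^sup>2 + 2 * (\<bar>eps t\<bar> * norm (z t))\<^sup>2"
    using norm_add_sq_le[of "z' t" "eps t *\<^sub>R z t"] norm_T_eq[OF assms(1)] by simp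
  also have "(\<bar>eps t\<bar> * norm (z t))\<^sup>2 \<le> (\<bar>eps t\<bar> * R)\<^sup>2"
    using assms(2) by (intro power_mono mult_left_mono) auto
  finally show ?thesis
    by (simp add: power_mult_distrib mult_ac)
qed

lemma eps_continuous: "continuous_on {t0..} eps"
  using eps_deriv DERIV_continuous continuous_on_eq_continuous_within by fastforce

lemma eps'_continuous: "continuous_on {t0..} eps'"
  using eps'_deriv DERIV_continuous continuous_on_eq_continuous_within by fastforce

lemma z_continuous: "continuous_on {t0..} z"
  using z_deriv has_vector_derivative_continuous continuous_on_eq_continuous_within by fastforce

lemma z_deriv_right: "t \<ge> t0 \<Longrightarrow> (z has_vector_derivative z' t) (at_right t)"
  by (rule has_vector_derivative_within_subset[OF z_deriv]) auto

lemma eps_deriv_right: "t \<ge> t0 \<Longrightarrow> (eps has_real_derivative eps' t) (at_right t)"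
  by (rule DERIV_subset[OF eps_deriv]) auto

lemma eps'_deriv_right: "t \<ge> t0 \<Longrightarrow> (eps' has_real_derivative eps'' t) (at_right t)"
  by (rule DERIV_subset[OF eps'_deriv]) auto

lemma rho_deriv: "t \<ge> t0 \<Longrightarrow> (rho has_real_derivative eps t) (at_right t)"
proof -
  assume "t \<ge> t0"
  have "continuous_on {t0..t+1} eps"
    using eps_continuous by (rule continuous_on_subset) auto
  with \<open>t \<ge> t0\<close> have "(rho has_real_derivative eps t) (at t within {t0..t+1})"
    unfolding rho_def[abs_def] by (intro integral_has_real_derivative) auto
  then have "(rho has_real_derivative eps t) (at t within {t..t+1})"
    by (rule DERIV_subset) (use \<open>t \<ge> t0\<close> in auto)
  then show ?thesis
    by (simp add: at_within_Icc_at_right)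
qed

lemma rho_continuous: "continuous_on {t0..t} rho"
proof -
  have "continuous_on {t0..t} eps"
    using eps_continuous by (rule continuous_on_subset) auto
  then show ?thesis
    unfolding rho_def[abs_def] by (intro indefinite_integral_continuous_1 integrable_continuous_real)
qed

lemma rho_nonneg: "t \<ge> t0 \<Longrightarrow> 0 \<le> rho t"
  unfolding rho_def using eps_pos by (intro integral_nonneg integrable_continuous_real
      continuous_on_subset[OF eps_continuous]) (auto intro: less_imp_le)

definition anchored_energy :: "'h \<Rightarrow> real \<Rightarrow> real" where
  "anchored_energy zb t = exp (rho t) * ((norm (z t - zb))\<^sup>2 - (norm zb)\<^sup>2)"

lemma anchored_energy_right_Dini:
  assumes T_zb: "T zb = 0" and "s \<ge> t0"
  shows "right_Dini_le (anchored_energy zb) s 0"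
proof -
  define r where "r s = (norm (z s - zb))\<^sup>2" for s
  have "((\<lambda>s. z s - zb) has_vector_derivative z' s) (at_right s)"
    using has_vector_derivative_diff[OF z_deriv_right[OF \<open>s \<ge> t0\<close>] has_vector_derivative_const] by simp
  then have "(r has_real_derivative 2 * inner (z s - zb) (z' s)) (at_right s)"
    unfolding r_def by (rule has_real_derivative_norm_sq)
  then have "((\<lambda>s. exp (rho s) * (r s - (norm zb)\<^sup>2)) has_real_derivative
      exp (rho s) * (eps s * (r s - (norm zb)\<^sup>2) + 2 * inner (z s - zb) (z' s))) (at_right s)"
    by (auto intro!: derivative_eq_intros rho_deriv[OF \<open>s \<ge> t0\<close>] simp: algebra_simps)
  then have "right_Dini_le (anchored_energy zb) s
      (exp (rho s) * (eps s * (r s - (norm zb)\<^sup>2) + 2 * inner (z s - zb) (z' s)))"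
    unfolding anchored_energy_def[abs_def] r_def by (rule right_Dini_le_if_has_derivative)
  moreover have "eps s * (r s - (norm zb)\<^sup>2) + 2 * inner (z s - zb) (z' s)
      = - 2 * inner (T (z s) - T zb) (z s - zb) - eps s * (norm (z s))\<^sup>2"
  proof -
    have "inner (z s - zb) (z' s) = - inner (T (z s) - T zb) (z s - zb) - eps s * inner (z s - zb) (z s)"
      using assms by (simp add: velocity_eq inner_diff_right inner_commute)
    moreover have "r s - (norm zb)\<^sup>2 - 2 * inner (z s - zb) (z s) = - (norm (z s))\<^sup>2"
      by (simp add: r_def power2_norm_eq_inner inner_diff_left inner_diff_right inner_commute)
    then have "eps s * (r s - (norm zb)\<^sup>2 - 2 * inner (z s - zb) (z s)) = - (eps s * (norm (z s))\<^sup>2)"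
      by simp
    ultimately show ?thesis
      by (simp add: algebra_simps)
  qed
  moreover have "0 \<le> eps s * (norm (z s))\<^sup>2"
    using eps_pos[OF \<open>s \<ge> t0\<close>] by simp
  ultimately show ?thesis
    using T_monotone[of "z s" zb] by (elim right_Dini_le_mono) (auto intro: mult_nonneg_nonpos)
qed

lemma trajectory_bounded:
  assumes T_zb: "T zb = 0" and "t \<ge> t0"
  shows "norm (z t - zb) \<le> max (norm zb) (norm (z t0 - zb))"
proof -
  have "continuous_on {t0..t} z"
    using z_continuous by (rule continuous_on_subset) auto
  then have "continuous_on {t0..t} (anchored_energy zb)"
    unfolding anchored_energy_def[abs_def] by (intro continuous_intros rho_continuous)
  then have decrease: "anchored_energy zb t \<le> anchored_energy zb t0"
    using \<open>t \<ge> t0\<close> anchored_energy_right_Dini[OF T_zb] nonincreasing_if_right_Dini_le_0[of t0 t] by auto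
  have "(norm (z t - zb))\<^sup>2 \<le> max ((norm zb)\<^sup>2) ((norm (z t0 - zb))\<^sup>2)"
  proof (cases "(norm (z t - zb))\<^sup>2 \<le> (norm zb)\<^sup>2")
    case False
    have "exp (rho t) \<ge> 1"
      using rho_nonneg[OF \<open>t \<ge> t0\<close>] by simp
    then have "1 * ((norm (z t - zb))\<^sup>2 - (norm zb)\<^sup>2) \<le> anchored_energy zb t"
      unfolding anchored_energy_def using False by (intro mult_right_mono) auto
    with decrease show ?thesis
      by (simp add: anchored_energy_def rho_def)
  qed (rule max.coboundedI1)
  then show ?thesis
    by (auto simp: max_def intro: power2_le_imp_le)
qed

definition lyapunov :: "real \<Rightarrow> real" where
  "lyapunov t = exp (2 * rho t) * ((norm (z' t))\<^sup>2 + eps' t * (norm (z t))\<^sup>2)"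

lemma lyapunov_right_Dini:
  assumes "t \<ge> t0"
  shows "right_Dini_le lyapunov t (exp (2 * rho t) * (norm (z t))\<^sup>2 * (2 * eps t * eps' t + eps'' t))"
proof -
  obtain L where L: "L-lipschitz_on (ball (z t) 1) T"
    using T_lipschitz[of "ball (z t) 1"] by auto
  have "((\<lambda>s. eps s *\<^sub>R z s) has_vector_derivative eps t *\<^sub>R z' t + eps' t *\<^sub>R z t) (at_right t)"
    using has_vector_derivative_scaleR[OF eps_deriv_right z_deriv_right] assms by simp
  from right_Dini_le_norm_sq_monotone_flow[where v = z', OF T_monotone L open_ball _ z_deriv_right[OF assms] this]
  have velocity: "right_Dini_le (\<lambda>s. (norm (z' s))\<^sup>2) t
      (- 2 * inner (eps t *\<^sub>R z' t + eps' t *\<^sub>R z t) (z' t))"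
    using assms by (simp add: velocity_eq)
  have "((\<lambda>s. eps' s * (norm (z s))\<^sup>2) has_real_derivative
      eps'' t * (norm (z t))\<^sup>2 + 2 * inner (z t) (z' t) * eps' t) (at_right t)"
    using assms by (intro DERIV_mult eps'_deriv_right has_real_derivative_norm_sq z_deriv_right)
  from right_Dini_le_add[OF velocity right_Dini_le_if_has_derivative[OF this]]
  have "right_Dini_le (\<lambda>s. (norm (z' s))\<^sup>2 + eps' s * (norm (z s))\<^sup>2) t
      (eps'' t * (norm (z t))\<^sup>2 - 2 * eps t * (norm (z' t))\<^sup>2)"
  proof (rule right_Dini_le_mono)
    have "inner (eps t *\<^sub>R z' t + eps' t *\<^sub>R z t) (z' t) = eps t * (norm (z' t))\<^sup>2 + eps' t * inner (z t) (z' t)"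
      by (simp add: inner_add_left power2_norm_eq_inner)
    then show "- 2 * inner (eps t *\<^sub>R z' t + eps' t *\<^sub>R z t) (z' t)
        + (eps'' t * (norm (z t))\<^sup>2 + 2 * inner (z t) (z' t) * eps' t)
        \<le> eps'' t * (norm (z t))\<^sup>2 - 2 * eps t * (norm (z' t))\<^sup>2"
      by (simp add: algebra_simps inner_commute dot_square_norm)
  qed
  moreover have "((\<lambda>s. exp (2 * rho s)) has_real_derivative 2 * eps t * exp (2 * rho t)) (at_right t)"
    using assms by (auto intro!: derivative_eq_intros rho_deriv)
  ultimately have "right_Dini_le lyapunov t (exp (2 * rho t) * (eps'' t * (norm (z t))\<^sup>2 - 2 * eps t * (norm (z' t))\<^sup>2)
      + 2 * eps t * exp (2 * rho t) * ((norm (z' t))\<^sup>2 + eps' t * (norm (z t))\<^sup>2))"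
    unfolding lyapunov_def[abs_def] by (rule right_Dini_le_mult_left) simp
  then show ?thesis
    by (rule right_Dini_le_mono) (simp add: algebra_simps)
qed

lemma lyapunov_continuous: "continuous_on {t0..t} lyapunov"
proof -
  have "{t0..t} \<subseteq> {t0..}" by auto
  then have "continuous_on {t0..t} z" "continuous_on {t0..t} z'" "continuous_on {t0..t} eps'"
    using z_continuous z'_continuous eps'_continuous by (auto intro: continuous_on_subset)
  then show ?thesis
    unfolding lyapunov_def[abs_def] by (intro continuous_intros rho_continuous)
qed

context
  fixes tp :: real
  assumes tp: "t0 \<le> tp"
    and eps_sq_plus_eps'_nonneg: "\<And>t. t \<ge> tp \<Longrightarrow> 0 \<le> (eps t)\<^sup>2 + eps' t"
    and lyapunov_decay: "\<And>t. t \<ge> tp \<Longrightarrow> 2 * eps t * eps' t + eps'' t \<le> 0"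
begin

lemma lyapunov_nonincreasing:
  assumes "t \<ge> tp"
  shows "lyapunov t \<le> lyapunov tp"
proof (rule nonincreasing_if_right_Dini_le_0[OF assms])
  show "continuous_on {tp..t} lyapunov"
    using lyapunov_continuous by (rule continuous_on_subset) (use tp in auto)
  fix s assume "s \<in> {tp..<t}"
  then have "exp (2 * rho s) * (norm (z s))\<^sup>2 * (2 * eps s * eps' s + eps'' s) \<le> 0"
    using lyapunov_decay[of s] by (intro mult_nonneg_nonpos) auto
  with \<open>s \<in> {tp..<t}\<close> tp show "right_Dini_le lyapunov s 0"
    using lyapunov_right_Dini[of s] right_Dini_le_mono by auto
qed

lemma velocity_sq_le:
  assumes "t \<ge> tp"
  shows "(norm (z' t))\<^sup>2 \<le> max (lyapunov tp) 0 * exp (- 2 * rho t) + (eps t)\<^sup>2 * (norm (z t))\<^sup>2"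
proof -
  have "- eps' t * (norm (z t))\<^sup>2 \<le> (eps t)\<^sup>2 * (norm (z t))\<^sup>2"
    using eps_sq_plus_eps'_nonneg[OF assms] by (intro mult_right_mono) auto
  then have "exp (2 * rho t) * ((norm (z' t))\<^sup>2 - (eps t)\<^sup>2 * (norm (z t))\<^sup>2) \<le> lyapunov t"
    unfolding lyapunov_def by (intro mult_left_mono) auto
  also have "\<dots> \<le> max (lyapunov tp) 0"
    using lyapunov_nonincreasing[OF assms] by simp
  finally have "exp (2 * rho t) * ((norm (z' t))\<^sup>2 - (eps t)\<^sup>2 * (norm (z t))\<^sup>2) \<le> max (lyapunov tp) 0" .
  then show ?thesis
    by (simp add: exp_minus field_simps)
qed

lemma velocity_eps_sq_bigo:
  assumes T_zb: "T zb = 0"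
  shows "(\<lambda>t. (norm (z' t))\<^sup>2 + (eps t)\<^sup>2) \<in> O[at_top](\<lambda>t. exp (- 2 * rho t) + (eps t)\<^sup>2)"
proof (rule bigoI)
  define R where "R = max (norm zb) (norm (z t0 - zb)) + norm zb"
  define C where "C = max (lyapunov tp) 0 + R\<^sup>2 + 1"
  have "(norm (z' t))\<^sup>2 + (eps t)\<^sup>2 \<le> C * (exp (- 2 * rho t) + (eps t)\<^sup>2)" if "t \<ge> tp" for t
  proof -
    have "norm (z t) \<le> R"
      using trajectory_bounded[OF T_zb, of t] that tp norm_triangle_ineq2[of "z t" zb] by (simp add: R_def)
    then have "(eps t)\<^sup>2 * (norm (z t))\<^sup>2 \<le> (eps t)\<^sup>2 * R\<^sup>2"
      by (intro mult_left_mono power_mono) auto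
    with velocity_sq_le[OF that]
    have "(norm (z' t))\<^sup>2 + (eps t)\<^sup>2 \<le> max (lyapunov tp) 0 * exp (- 2 * rho t) + (R\<^sup>2 + 1) * (eps t)\<^sup>2"
      by (simp add: algebra_simps)
    also have "\<dots> \<le> C * (exp (- 2 * rho t) + (eps t)\<^sup>2)"
      unfolding C_def by (simp add: algebra_simps add_mono mult_right_mono)
    finally show ?thesis .
  qed
  then show "eventually (\<lambda>t. norm ((norm (z' t))\<^sup>2 + (eps t)\<^sup>2) \<le> C * norm (exp (- 2 * rho t) + (eps t)\<^sup>2)) at_top"
    unfolding eventually_at_top_linorder by (intro exI[of _ tp]) simp
qed

lemma bigo_if_bounded_by_velocity:
  assumes T_zb: "T zb = 0"
    and bound: "\<And>t. t \<ge> tp \<Longrightarrow> \<bar>f t\<bar> \<le> a * (norm (z' t))\<^sup>2 + b * (eps t)\<^sup>2" and "0 \<le> a" "0 \<le> b"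
  shows "f \<in> O[at_top](\<lambda>t. exp (- 2 * rho t) + (eps t)\<^sup>2)"
proof (rule bigo_if_eventually_bounded_by[OF velocity_eps_sq_bigo[OF T_zb]])
  have "\<bar>f t\<bar> \<le> (a + b) * ((norm (z' t))\<^sup>2 + (eps t)\<^sup>2)" if "t \<ge> tp" for t
    using bound[OF that] mult_right_mono[of a "a + b" "(norm (z' t))\<^sup>2"]
      mult_right_mono[of b "a + b" "(eps t)\<^sup>2"] \<open>0 \<le> a\<close> \<open>0 \<le> b\<close>
    by (simp add: distrib_left)
  then show "eventually (\<lambda>t. norm (f t) \<le> (a + b) * ((norm (z' t))\<^sup>2 + (eps t)\<^sup>2)) at_top"
    unfolding eventually_at_top_linorder by auto
qed

lemma convergence_rates:
  assumes T_zb: "T zb = 0"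
  shows "(\<lambda>t. (norm (z' t + eps t *\<^sub>R (z t - zb)))\<^sup>2) \<in> O[at_top](\<lambda>t. exp (- 2 * rho t) + (eps t)\<^sup>2)"
    and "(\<lambda>t. eps t * inner (T (z t)) (z t - zb)) \<in> O[at_top](\<lambda>t. exp (- 2 * rho t) + (eps t)\<^sup>2)"
    and "(\<lambda>t. (norm (T (z t) - T zb))\<^sup>2) \<in> O[at_top](\<lambda>t. exp (- 2 * rho t) + (eps t)\<^sup>2)"
proof -
  define R where "R = max (norm zb) (norm (z t0 - zb))"
  have R: "norm (z t - zb) \<le> R" and Rz: "norm (z t) \<le> R + norm zb" if "t \<ge> tp" for t
    using trajectory_bounded[OF T_zb, of t] that tp norm_triangle_ineq2[of "z t" zb] by (auto simp: R_def)
  have T_sq: "(norm (T (z t)))\<^sup>2 \<le> 2 * (norm (z' t))\<^sup>2 + 2 * (R + norm zb)\<^sup>2 * (eps t)\<^sup>2" if "t \<ge> tp" for t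
    using that tp Rz[OF that] by (intro norm_T_sq_le) auto
  show "(\<lambda>t. (norm (z' t + eps t *\<^sub>R (z t - zb)))\<^sup>2) \<in> O[at_top](\<lambda>t. exp (- 2 * rho t) + (eps t)\<^sup>2)"
  proof (rule bigo_if_bounded_by_velocity[OF T_zb])
    fix t assume "t \<ge> tp"
    have "(norm (z' t + eps t *\<^sub>R (z t - zb)))\<^sup>2 \<le> 2 * (norm (z' t))\<^sup>2 + 2 * (\<bar>eps t\<bar> * norm (z t - zb))\<^sup>2"
      using norm_add_sq_le[of "z' t" "eps t *\<^sub>R (z t - zb)"] by simp
    also have "(\<bar>eps t\<bar> * norm (z t - zb))\<^sup>2 \<le> (\<bar>eps t\<bar> * R)\<^sup>2"
      using R[OF \<open>t \<ge> tp\<close>] by (intro power_mono mult_left_mono) auto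
    finally show "\<bar>(norm (z' t + eps t *\<^sub>R (z t - zb)))\<^sup>2\<bar> \<le> 2 * (norm (z' t))\<^sup>2 + (2 * R\<^sup>2) * (eps t)\<^sup>2"
      by (simp add: power_mult_distrib mult_ac)
  qed simp_all
  show "(\<lambda>t. eps t * inner (T (z t)) (z t - zb)) \<in> O[at_top](\<lambda>t. exp (- 2 * rho t) + (eps t)\<^sup>2)"
  proof (rule bigo_if_bounded_by_velocity[OF T_zb])
    fix t assume "t \<ge> tp"
    have "\<bar>inner (T (z t)) (z t - zb)\<bar> \<le> norm (T (z t)) * R"
      using Cauchy_Schwarz_ineq2[of "T (z t)" "z t - zb"] R[OF \<open>t \<ge> tp\<close>]
      by (meson mult_left_mono norm_ge_zero order_trans)
    then have "\<bar>eps t\<bar> * \<bar>inner (T (z t)) (z t - zb)\<bar> \<le> \<bar>eps t\<bar> * (norm (T (z t)) * R)"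
      by (rule mult_left_mono) simp
    then have "\<bar>eps t * inner (T (z t)) (z t - zb)\<bar> \<le> (\<bar>eps t\<bar> * R) * norm (T (z t))"
      by (simp add: abs_mult mult_ac)
    also have "\<dots> \<le> ((\<bar>eps t\<bar> * R)\<^sup>2 + (norm (T (z t)))\<^sup>2) / 2"
      using sum_squares_bound[of "\<bar>eps t\<bar> * R" "norm (T (z t))"] by simp
    also have "\<dots> \<le> (norm (z' t))\<^sup>2 + (R\<^sup>2 / 2 + (R + norm zb)\<^sup>2) * (eps t)\<^sup>2"
      using T_sq[OF \<open>t \<ge> tp\<close>] by (simp add: field_simps)
    finally show "\<bar>eps t * inner (T (z t)) (z t - zb)\<bar> \<le> 1 * (norm (z' t))\<^sup>2 + (R\<^sup>2 / 2 + (R + norm zb)\<^sup>2) * (eps t)\<^sup>2"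
      by simp
  qed simp_all
  show "(\<lambda>t. (norm (T (z t) - T zb))\<^sup>2) \<in> O[at_top](\<lambda>t. exp (- 2 * rho t) + (eps t)\<^sup>2)"
    using T_sq T_zb by (intro bigo_if_bounded_by_velocity[OF T_zb, of _ 2 "2 * (R + norm zb)\<^sup>2"]) simp_all
qed

end

end

theorem theorem4p1:
  fixes f :: "'a::{real_inner,complete_space} \<Rightarrow> real"
    and gradf :: "'a \<Rightarrow> 'a"
    and A :: "'a \<Rightarrow> 'b::{real_inner,complete_space}"
    and Astar :: "'b \<Rightarrow> 'a"
    and b :: 'b
    and t0 tp :: real
    and eps eps' eps'' :: "real \<Rightarrow> real"
    and x x' :: "real \<Rightarrow> 'a"
    and lam lam' :: "real \<Rightarrow> 'b"
    and xb :: 'a and lb :: 'b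
  assumes f_convex: "convex_on UNIV f"
    and f_grad: "\<And>u. (f has_derivative (\<lambda>h. inner (gradf u) h)) (at u)"
    and gradf_cont: "continuous_on UNIV gradf"
    and gradf_lip: "\<And>B. bounded B \<Longrightarrow> \<exists>K. \<forall>u\<in>B. \<forall>v\<in>B. norm (gradf u - gradf v) \<le> K * norm (u - v)"
    and A_lin: "bounded_linear A"
    and A_adj: "\<And>u v. inner (A u) v = inner u (Astar v)"
    and t0_nonneg: "t0 \<ge> 0"
    and eps_pos: "\<And>t. t \<ge> t0 \<Longrightarrow> eps t > 0"
    and eps_d1: "\<And>t. t \<ge> t0 \<Longrightarrow> (eps has_real_derivative eps' t) (at t within {t0..})"
    and eps_d2: "\<And>t. t \<ge> t0 \<Longrightarrow> (eps' has_real_derivative eps'' t) (at t within {t0..})"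
    and eps''_cont: "continuous_on {t0..} eps''"
    and eps_lim: "(eps \<longlongrightarrow> 0) at_top"
    and x_deriv: "\<And>t. t \<ge> t0 \<Longrightarrow> (x has_vector_derivative x' t) (at t within {t0..})"
    and lam_deriv: "\<And>t. t \<ge> t0 \<Longrightarrow> (lam has_vector_derivative lam' t) (at t within {t0..})"
    and x'_cont: "continuous_on {t0..} x'"
    and lam'_cont: "continuous_on {t0..} lam'"
    and ode_x: "\<And>t. t \<ge> t0 \<Longrightarrow> x' t + gradf (x t) + Astar (lam t) + eps t *\<^sub>R x t = 0"
    and ode_lam: "\<And>t. t \<ge> t0 \<Longrightarrow> lam' t + (b - A (x t)) + eps t *\<^sub>R lam t = 0"
    and SM_nonempty: "optsol f A b \<times> lagmult f gradf A Astar b \<noteq> {}"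
    and tp_ge: "tp \<ge> t0"
    and cond1: "\<And>t. t \<ge> tp \<Longrightarrow> (eps t)\<^sup>2 + eps' t \<ge> 0"
    and cond2: "\<And>t. t \<ge> tp \<Longrightarrow> 2 * eps t * eps' t + eps'' t \<le> 0"
    and xb_lb: "(xb, lb) \<in> optsol f A b \<times> lagmult f gradf A Astar b"
  shows "(\<lambda>t. (norm ((x' t, lam' t) + eps t *\<^sub>R ((x t, lam t) - (xb, lb))))\<^sup>2)
           \<in> O[at_top](\<lambda>t. exp (- 2 * integral {t0..t} eps) + (eps t)\<^sup>2)
       \<and> (\<lambda>t. eps t * (Lag f A b (x t) lb - Lag f A b xb (lam t)))
           \<in> O[at_top](\<lambda>t. exp (- 2 * integral {t0..t} eps) + (eps t)\<^sup>2)
       \<and> (\<lambda>t. (norm (Top gradf A Astar b (x t) (lam t) - Top gradf A Astar b xb lb))\<^sup>2)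
           \<in> O[at_top](\<lambda>t. exp (- 2 * integral {t0..t} eps) + (eps t)\<^sup>2)"
proof -
  interpret problem: linearly_constrained_convex f gradf A Astar b
    using f_convex f_grad A_lin A_adj by (rule linearly_constrained_convex.intro)
  interpret dynamics: tikhonov_monotone_flow problem.T eps eps' eps'' "\<lambda>t. (x t, lam t)" "\<lambda>t. (x' t, lam' t)" t0
  proof
    show "\<And>B. bounded B \<Longrightarrow> \<exists>L. L-lipschitz_on B problem.T"
      using gradf_lip by (rule problem.T_lipschitz_on_bounded)
    show "\<And>t. t \<ge> t0 \<Longrightarrow> ((\<lambda>t. (x t, lam t)) has_vector_derivative (x' t, lam' t)) (at t within {t0..})"
      by (intro has_vector_derivative_Pair x_deriv lam_deriv)
    show "continuous_on {t0..} (\<lambda>t. (x' t, lam' t))"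
      by (intro continuous_on_Pair x'_cont lam'_cont)
    show "\<And>t. t \<ge> t0 \<Longrightarrow> (x' t, lam' t) + problem.T (x t, lam t) + eps t *\<^sub>R (x t, lam t) = 0"
      using ode_x ode_lam by (simp add: problem.T_def Top_def zero_prod_def add.assoc)
  qed (fact problem.T_monotone eps_pos eps_d1 eps_d2)+
  have T_zb: "problem.T (xb, lb) = 0"
    using xb_lb by (rule problem.T_saddle_point)
  note rates = dynamics.convergence_rates[OF tp_ge cond1 cond2 T_zb, unfolded dynamics.rho_def]
  have "eventually (\<lambda>t. norm (eps t * (Lag f A b (x t) lb - Lag f A b xb (lam t)))
      \<le> norm (eps t * inner (problem.T (x t, lam t)) ((x t, lam t) - (xb, lb)))) at_top"
    using eventually_ge_at_top[of t0]
  proof eventually_elim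
    case (elim t)
    then show ?case
      using problem.scaled_Lag_gap_le[OF xb_lb, of "eps t" "x t" "lam t"] eps_pos[of t] by simp
  qed
  then have "(\<lambda>t. eps t * (Lag f A b (x t) lb - Lag f A b xb (lam t)))
      \<in> O[at_top](\<lambda>t. eps t * inner (problem.T (x t, lam t)) ((x t, lam t) - (xb, lb)))"
    by (rule landau_o.big_mono)
  with rates show ?thesis
    by (auto simp: problem.T_def intro: landau_o.big_trans)
qed

end
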